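(* Let $A\in\mathbb{R}^{m\times n}$ with $\delta_{2k}<1$, let $x\in\mathbb{R}^n$, $\eta\in\mathbb{R}^m$, $y=Ax+\eta$, $S=\mathcal{L}_k(x)$ and $\eta'=Ax_{\overline S}+\eta$. Let $u\in\mathbb{R}^n$ be arbitrary, let $$w\in\arg\min_{w'}\{\|y-A(u\otimes w')\|_2^2:\ \mathbf e^Tw'=k,\ 0\le w'\le\mathbf e\},$$ and let $S'=\operatorname{supp}(\mathcal{H}_k(u\otimes w))$. Let $\hat w\in\{0,1\}^n$ be a $k$-sparse binary vector with $S\subseteq\operatorname{supp}(\hat w)$. Then (i) $$\|(x_S-u\otimes w)_{S\cup S'}\|_2\le\sqrt{\frac{1+\delta_k}{1-\delta_{2k}}}\|(x_S-u)\otimes\hat w\|_2+\frac{2}{\sqrt{1-\delta_{2k}}}\|\eta'\|_2+\frac{1}{\sqrt{1-\delta_{2k}}}\left\|A\left[(x_S-u\otimes w)_{\overline{S\cup S'}}\right]\right\|_2;$$ (ii) $$\left\|A\left[(x_S-u\otimes w)_{\overline{S\cup S'}}\right]\right\|_2\le2\sqrt{1+\delta_k}\,\|\mathcal{H}_k(u-x_S)\|_2 .$$ (In the paper, $u=u^p$ and $w=w^p$ are the iterates of the NTROT algorithm and $S'=\operatorname{supp}(x^{p+1})$.)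
   Context: Notation: $\|\cdot\|_2$ is the Euclidean norm; a vector is $k$-sparse if it has at most $k$ nonzero entries. For $\Omega\subseteq\{1,\dots,n\}$, $\overline\Omega$ is its complement and $x_\Omega$ is the vector obtained from $x$ by keeping the entries indexed by $\Omega$ and setting the others to zero. $\mathcal{L}_k(u)$ denotes the index set of the $k$ largest magnitudes of $u$ (ties broken arbitrarily), and $\mathcal{H}_k(u)=u_{\mathcal{L}_k(u)}$ is the hard thresholding operator (keeps the $k$ largest magnitudes, zeroes the rest). $u\otimes w$ is the entrywise (Hadamard) product; $\mathbf e=(1,\dots,1)^T$; inequalities between vectors are entrywise. The $q$-th order restricted isometry constant $\delta_q$ of $A$ is the smallest $\delta\ge0$ such that $(1-\delta)\|z\|_2^2\le\|Az\|_2^2\le(1+\delta)\|z\|_2^2$ for all $q$-sparse $z\in\mathbb{R}^n$. *)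

theory Defs
  imports "HOL-Analysis.Analysis"
begin

definition supp :: "real^'n \<Rightarrow> 'n set" where
  "supp z = {i. z $ i \<noteq> 0}"

definition sparse :: "nat \<Rightarrow> real^'n \<Rightarrow> bool" where
  "sparse k z \<longleftrightarrow> card (supp z) \<le> k"

definition restr :: "'n set \<Rightarrow> real^'n \<Rightarrow> real^'n" where
  "restr \<Omega> x = (\<chi> i. if i \<in> \<Omega> then x $ i else 0)"

definition had :: "real^'n \<Rightarrow> real^'n \<Rightarrow> real^'n" where
  "had u w = (\<chi> i. u $ i * w $ i)"

text \<open>Omega is an admissible value of L_k(u): an index set of k largest magnitudes
  (ties broken arbitrarily).\<close>
definition is_Lk :: "nat \<Rightarrow> real^'n \<Rightarrow> 'n set \<Rightarrow> bool" where
  "is_Lk k u \<Omega> \<longleftrightarrow> card \<Omega> = k \<and> (\<forall>i\<in>\<Omega>. \<forall>j. j \<notin> \<Omega> \<longrightarrow> \<bar>u $ j\<bar> \<le> \<bar>u $ i\<bar>)"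

definition ric :: "real^'n^'m \<Rightarrow> nat \<Rightarrow> real" where
  "ric A q = Inf {\<delta>. \<delta> \<ge> 0 \<and> (\<forall>z. sparse q z \<longrightarrow>
      (1 - \<delta>) * (norm z)\<^sup>2 \<le> (norm (A *v z))\<^sup>2 \<and> (norm (A *v z))\<^sup>2 \<le> (1 + \<delta>) * (norm z)\<^sup>2)}"

end

theory Submission
  imports Defs
begin

text \<open>Write \<open>v = x\<^sub>S - u \<otimes> w\<close> and \<open>\<eta>' = A x' + \<eta>\<close>, where \<open>x'\<close> is the part of
  \<open>x\<close> off \<open>S\<close>. The binary vector \<open>what\<close> is forced to be the indicator of \<open>S\<close>,
  hence a feasible weight, and minimality of \<open>w\<close> gives \<open>\<parallel>A v + \<eta>'\<parallel> \<le> \<parallel>A e + \<eta>'\<parallel>\<close> for the \<open>k\<close>-sparse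
  \<open>e = (x\<^sub>S - u) \<otimes> what\<close>. Bound (i) follows by applying the lower RIP inequality to the
  \<open>2k\<close>-sparse part of \<open>v\<close> on \<open>S \<union> S'\<close> and the triangle inequality to the rest.

  Off \<open>S \<union> S'\<close> the vector \<open>v\<close> is \<open>-b \<otimes> w\<close> with \<open>b\<close> dominated entrywise by
  \<open>u - x\<^sub>S\<close>. The function \<open>w \<mapsto> \<parallel>A (b \<otimes> w)\<parallel>\<close> is convex, and the capped simplex
  \<open>{w. \<Sum>w = k, 0 \<le> w \<le> 1}\<close> is the convex hull of the indicator vectors of \<open>k\<close>-sets, so
  it suffices to bound \<open>\<parallel>A b\<^sub>T\<parallel>\<close> for \<open>|T| = k\<close>; the upper RIP inequality and the
  maximality of a top-\<open>k\<close> index set do this, even without the factor 2 of (ii).\<close>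

definition ric_candidates :: "real^'n^'m \<Rightarrow> nat \<Rightarrow> real set" where
  "ric_candidates A q = {\<delta>. \<delta> \<ge> 0 \<and> (\<forall>z. sparse q z \<longrightarrow>
      (1 - \<delta>) * (norm z)\<^sup>2 \<le> (norm (A *v z))\<^sup>2 \<and> (norm (A *v z))\<^sup>2 \<le> (1 + \<delta>) * (norm z)\<^sup>2)}"

lemma ric_eq_Inf_candidates: "ric A q = Inf (ric_candidates A q)"
  unfolding ric_def ric_candidates_def by simp

lemma ric_candidates_nonempty: "ric_candidates (A::real^'n^'m) q \<noteq> {}"
proof -
  obtain C where C: "\<And>z. norm (A *v z) \<le> norm z * C"
    using bounded_linear.bounded[OF matrix_vector_mul_bounded_linear] by blast
  have "max 1 (C\<^sup>2) \<in> ric_candidates A q"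
    unfolding ric_candidates_def
  proof safe
    fix z :: "real^'n"
    have "(1 - max 1 (C\<^sup>2)) * (norm z)\<^sup>2 \<le> 0"
      by (simp add: mult_nonpos_nonneg)
    then show "(1 - max 1 (C\<^sup>2)) * (norm z)\<^sup>2 \<le> (norm (A *v z))\<^sup>2"
      by (smt (verit) zero_le_power2)
    have "(norm (A *v z))\<^sup>2 \<le> C\<^sup>2 * (norm z)\<^sup>2"
      using power_mono[OF C[of z] norm_ge_zero, of 2] by (simp add: power_mult_distrib mult.commute)
    also have "\<dots> \<le> (1 + max 1 (C\<^sup>2)) * (norm z)\<^sup>2"
      by (intro mult_right_mono) auto
    finally show "(norm (A *v z))\<^sup>2 \<le> (1 + max 1 (C\<^sup>2)) * (norm z)\<^sup>2" .
  qed simp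
  then show ?thesis by blast
qed

lemma ric_nonneg: "0 \<le> ric A q"
  unfolding ric_eq_Inf_candidates
  by (rule cInf_greatest[OF ric_candidates_nonempty]) (auto simp: ric_candidates_def)

lemma ric_power2_bounds:
  assumes "sparse q z"
  shows "(1 - ric A q) * (norm z)\<^sup>2 \<le> (norm (A *v z))\<^sup>2"
    and "(norm (A *v z))\<^sup>2 \<le> (1 + ric A q) * (norm z)\<^sup>2"
proof -
  have "(1 - ric A q) * (norm z)\<^sup>2 \<le> (norm (A *v z))\<^sup>2
        \<and> (norm (A *v z))\<^sup>2 \<le> (1 + ric A q) * (norm z)\<^sup>2"
  proof (cases "z = 0")
    case False
    then have pos: "(norm z)\<^sup>2 > 0" by simp
    have "\<bar>(norm (A *v z))\<^sup>2 / (norm z)\<^sup>2 - 1\<bar> \<le> ric A q"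
      unfolding ric_eq_Inf_candidates
    proof (rule cInf_greatest[OF ric_candidates_nonempty])
      fix \<delta> assume "\<delta> \<in> ric_candidates A q"
      with assms have "(1 - \<delta>) * (norm z)\<^sup>2 \<le> (norm (A *v z))\<^sup>2"
        "(norm (A *v z))\<^sup>2 \<le> (1 + \<delta>) * (norm z)\<^sup>2"
        by (auto simp: ric_candidates_def)
      with pos show "\<bar>(norm (A *v z))\<^sup>2 / (norm z)\<^sup>2 - 1\<bar> \<le> \<delta>"
        by (simp add: abs_le_iff field_simps)
    qed
    with pos show ?thesis by (simp add: abs_le_iff field_simps)
  qed simp
  then show "(1 - ric A q) * (norm z)\<^sup>2 \<le> (norm (A *v z))\<^sup>2"
    and "(norm (A *v z))\<^sup>2 \<le> (1 + ric A q) * (norm z)\<^sup>2" by auto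
qed

lemma ric_norm_upper: "sparse q z \<Longrightarrow> norm (A *v z) \<le> sqrt (1 + ric A q) * norm z"
  using real_sqrt_le_mono[OF ric_power2_bounds(2)] by (simp add: real_sqrt_mult)

lemma ric_norm_lower: "sparse q z \<Longrightarrow> sqrt (1 - ric A q) * norm z \<le> norm (A *v z)"
  using real_sqrt_le_mono[OF ric_power2_bounds(1)] by (simp add: real_sqrt_mult)

lemma card_supp_restr_le: "card (supp (restr T z)) \<le> card T"
  by (rule card_mono) (auto simp: supp_def restr_def)

lemma sparse_restr: "card T \<le> q \<Longrightarrow> sparse q (restr T z)"
  unfolding sparse_def using card_supp_restr_le order_trans by blast

lemma power2_norm_restr: "(norm (restr T z))\<^sup>2 = (\<Sum>i\<in>T. (z $ i)\<^sup>2)"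
  unfolding power2_norm_eq_inner inner_vec_def restr_def
  by (simp add: power2_eq_square if_distrib sum.If_cases)

lemma is_Lk_norm_restr_maximal:
  assumes Lk: "is_Lk k z \<Omega>" and T: "card T \<le> k"
  shows "norm (restr T z) \<le> norm (restr \<Omega> z)"
proof -
  let ?g = "\<lambda>i. (z $ i)\<^sup>2"
  have larger: "?g j \<le> ?g i" if "i \<in> \<Omega>" "j \<notin> \<Omega>" for i j
    using Lk that unfolding is_Lk_def by (metis abs_le_square_iff)
  have "card T = card (T \<inter> \<Omega>) + card (T - \<Omega>)" "card \<Omega> = card (T \<inter> \<Omega>) + card (\<Omega> - T)"
    using card_Diff_subset_Int[of T \<Omega>] card_Diff_subset_Int[of \<Omega> T]
      card_mono[of T "T \<inter> \<Omega>"] card_mono[of \<Omega> "\<Omega> \<inter> T"] by (simp_all add: Int_commute)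
  then have "card (T - \<Omega>) \<le> card (\<Omega> - T)"
    using Lk T by (simp add: is_Lk_def)
  then obtain f where f: "f ` (T - \<Omega>) \<subseteq> \<Omega> - T" "inj_on f (T - \<Omega>)"
    using card_le_inj[of "T - \<Omega>" "\<Omega> - T"] by auto
  have "(\<Sum>i\<in>T - \<Omega>. ?g i) \<le> (\<Sum>i\<in>T - \<Omega>. ?g (f i))"
    by (rule sum_mono) (use f larger in auto)
  also have "\<dots> = (\<Sum>i\<in>f ` (T - \<Omega>). ?g i)"
    by (simp add: sum.reindex f(2))
  also have "\<dots> \<le> (\<Sum>i\<in>\<Omega> - T. ?g i)"
    by (rule sum_mono2) (use f in auto)
  finally have "(\<Sum>i\<in>T \<inter> \<Omega>. ?g i) + (\<Sum>i\<in>T - \<Omega>. ?g i)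
      \<le> (\<Sum>i\<in>\<Omega> \<inter> T. ?g i) + (\<Sum>i\<in>\<Omega> - T. ?g i)"
    by (simp add: Int_commute)
  then have "(norm (restr T z))\<^sup>2 \<le> (norm (restr \<Omega> z))\<^sup>2"
    unfolding power2_norm_restr
    using sum.Int_Diff[OF finite, where A = T and B = \<Omega> and g = ?g]
      sum.Int_Diff[OF finite, where A = \<Omega> and B = T and g = ?g] by linarith
  then show ?thesis
    by (rule power2_le_imp_le) simp
qed

definition capped_simplex :: "nat \<Rightarrow> (real^'n) set" where
  "capped_simplex k = {w. (\<Sum>i\<in>UNIV. w $ i) = real k \<and> (\<forall>i. 0 \<le> w $ i \<and> w $ i \<le> 1)}"

definition indicator_vec :: "'n set \<Rightarrow> real^'n" where
  "indicator_vec T = (\<chi> i. if i \<in> T then 1 else 0)"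

definition fractional_coords :: "real^'n \<Rightarrow> 'n set" where
  "fractional_coords w = {i. 0 < w $ i \<and> w $ i < 1}"

lemma had_indicator_vec: "had b (indicator_vec T) = restr T b"
  by (simp add: had_def indicator_vec_def restr_def vec_eq_iff)

lemma indicator_vec_in_capped_simplex: "card T = k \<Longrightarrow> indicator_vec T \<in> capped_simplex k"
  by (simp add: capped_simplex_def indicator_vec_def sum.If_cases)

lemma capped_simplex_integral:
  assumes "w \<in> capped_simplex k" "fractional_coords w = {}"
  shows "w = indicator_vec {i. w $ i = 1}" and "card {i. w $ i = 1} = k"
proof -
  have w01: "w $ i = 0 \<or> w $ i = 1" for i
  proof -
    have "i \<notin> fractional_coords w" "0 \<le> w $ i" "w $ i \<le> 1"
      using assms by (auto simp: capped_simplex_def)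
    then show ?thesis by (auto simp: fractional_coords_def)
  qed
  then show w: "w = indicator_vec {i. w $ i = 1}"
    by (auto simp: indicator_vec_def vec_eq_iff)
  have "real k = (\<Sum>i\<in>UNIV. indicator_vec {i. w $ i = 1} $ i)"
    using assms(1) w by (simp add: capped_simplex_def)
  then show "card {i. w $ i = 1} = k"
    by (simp add: indicator_vec_def sum.If_cases)
qed

text \<open>The coordinates sum to an integer, so a single fractional coordinate is impossible.\<close>

lemma capped_simplex_not_one_fractional:
  assumes "w \<in> capped_simplex k"
  shows "fractional_coords w \<noteq> {i}"
proof
  assume F: "fractional_coords w = {i}"
  have wj: "w $ j = (if w $ j = 1 then 1 else 0)" if "j \<noteq> i" for j
  proof -
    have "j \<notin> fractional_coords w" "0 \<le> w $ j" "w $ j \<le> 1"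
      using assms F that by (auto simp: capped_simplex_def)
    then show ?thesis by (auto simp: fractional_coords_def)
  qed
  define c where "c = card ((UNIV - {i}) \<inter> {j. w $ j = 1})"
  have "real k = w $ i + (\<Sum>j\<in>UNIV - {i}. w $ j)"
    using assms by (simp add: capped_simplex_def sum.remove[of UNIV i])
  also have "(\<Sum>j\<in>UNIV - {i}. w $ j) = (\<Sum>j\<in>UNIV - {i}. if w $ j = 1 then 1 else 0)"
    by (rule sum.cong) (use wj in auto)
  also have "\<dots> = real c"
    by (simp add: c_def sum.If_cases)
  finally have "real k = w $ i + real c" .
  moreover have "0 < w $ i" "w $ i < 1"
    using F unfolding fractional_coords_def by auto
  ultimately have "c < k" "k < c + 1"
    by linarith+
  then show False by linarith
qed

lemma capped_simplex_shift:
  fixes w :: "real^'n"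
  assumes w: "w \<in> capped_simplex k" and ij: "i \<in> fractional_coords w" "j \<in> fractional_coords w" "i \<noteq> j"
    and t: "0 \<le> w $ i + t" "w $ i + t \<le> 1" "0 \<le> w $ j - t" "w $ j - t \<le> 1"
    and integral: "w $ i + t \<in> {0, 1} \<or> w $ j - t \<in> {0, 1}"
  shows "w + t *\<^sub>R (axis i 1 - axis j 1) \<in> capped_simplex k"
    and "fractional_coords (w + t *\<^sub>R (axis i 1 - axis j 1)) \<subset> fractional_coords w"
proof -
  define p where "p = w + t *\<^sub>R (axis i 1 - axis j 1)"
  have coord: "p $ l = (if l = i then w $ i + t else if l = j then w $ j - t else w $ l)" for l
    using ij(3) by (simp add: p_def axis_def)
  have "(\<Sum>l\<in>UNIV. p $ l) = (\<Sum>l\<in>UNIV. w $ l)"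
    by (simp add: p_def axis_def sum.distrib sum_subtractf right_diff_distrib flip: sum_distrib_left)
  then show "w + t *\<^sub>R (axis i 1 - axis j 1) \<in> capped_simplex k"
    using w t by (auto simp: capped_simplex_def coord simp flip: p_def)
  show "fractional_coords (w + t *\<^sub>R (axis i 1 - axis j 1)) \<subset> fractional_coords w"
    unfolding p_def[symmetric]
    using ij integral by (auto simp: fractional_coords_def coord split: if_splits)
qed

lemma capped_simplex_convex_split:
  fixes w :: "real^'n"
  assumes w: "w \<in> capped_simplex k" and ij: "i \<in> fractional_coords w" "j \<in> fractional_coords w" "i \<noteq> j"
  obtains p q a where "p \<in> capped_simplex k" "fractional_coords p \<subset> fractional_coords w"
    and "q \<in> capped_simplex k" "fractional_coords q \<subset> fractional_coords w"
    and "0 \<le> a" "a \<le> 1" "w = a *\<^sub>R p + (1 - a) *\<^sub>R q"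
proof -
  \<comment> \<open>move mass between coordinates \<open>i\<close> and \<open>j\<close>, in either direction, until one of them hits 0 or 1\<close>
  define p where "p t = w + t *\<^sub>R (axis i 1 - axis j 1)" for t
  define t1 where "t1 = - min (w $ i) (1 - w $ j)"
  define t2 where "t2 = min (1 - w $ i) (w $ j)"
  have frac: "0 < w $ i" "w $ i < 1" "0 < w $ j" "w $ j < 1"
    using ij by (auto simp: fractional_coords_def)
  then have "t1 < 0" "0 < t2"
    by (auto simp: t1_def t2_def)
  have endpoints: "p t \<in> capped_simplex k \<and> fractional_coords (p t) \<subset> fractional_coords w"
    if "t \<in> {t1, t2}" for t
    unfolding p_def using that frac
    by (intro conjI capped_simplex_shift[OF w ij]) (auto simp: t1_def t2_def)
  define a where "a = t2 / (t2 - t1)"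
  have a01: "0 \<le> a" "a \<le> 1"
    using \<open>t1 < 0\<close> \<open>0 < t2\<close> by (simp_all add: a_def divide_le_eq_1)
  have "a * t1 + (1 - a) * t2 = 0"
    using \<open>t1 < 0\<close> \<open>0 < t2\<close> by (simp add: a_def field_simps)
  moreover have "a *\<^sub>R (w + t1 *\<^sub>R d) + (1 - a) *\<^sub>R (w + t2 *\<^sub>R d)
      = w + (a * t1 + (1 - a) * t2) *\<^sub>R d" for d :: "real^'n"
    by (simp add: algebra_simps)
  ultimately have "w = a *\<^sub>R p t1 + (1 - a) *\<^sub>R p t2"
    by (simp add: p_def)
  with endpoints a01 show thesis
    by (intro that[of "p t1" "p t2" a]) auto
qed

lemma capped_simplex_subset_convex_hull:
  "capped_simplex k \<subseteq> convex hull (indicator_vec ` {T. card T = k})"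
proof
  fix w :: "real^'n"
  assume "w \<in> capped_simplex k"
  then show "w \<in> convex hull (indicator_vec ` {T. card T = k})"
  proof (induction "card (fractional_coords w)" arbitrary: w rule: less_induct)
    case less
    consider "fractional_coords w = {}" | i where "fractional_coords w = {i}"
      | i j where "i \<in> fractional_coords w" "j \<in> fractional_coords w" "i \<noteq> j"
      by (metis is_singletonI' is_singleton_the_elem)
    then show ?case
    proof cases
      case 1
      then show ?thesis
        using capped_simplex_integral[OF less.prems] by (metis (mono_tags) hull_inc imageI mem_Collect_eq)
    next
      case 2
      then show ?thesis
        using capped_simplex_not_one_fractional[OF less.prems] by blast
    next
      case 3
      obtain p q a where p: "p \<in> capped_simplex k" "fractional_coords p \<subset> fractional_coords w"
        and q: "q \<in> capped_simplex k" "fractional_coords q \<subset> fractional_coords w"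
        and a: "0 \<le> a" "a \<le> 1" "w = a *\<^sub>R p + (1 - a) *\<^sub>R q"
        using capped_simplex_convex_split[OF less.prems 3] .
      have "p \<in> convex hull (indicator_vec ` {T. card T = k})"
        using p by (intro less.hyps psubset_card_mono) auto
      moreover have "q \<in> convex hull (indicator_vec ` {T. card T = k})"
        using q by (intro less.hyps psubset_card_mono) auto
      ultimately show ?thesis
        using a by (auto intro: convexD[OF convex_convex_hull])
    qed
  qed
qed

lemma convex_on_norm_linear:
  assumes "linear L" "convex S"
  shows "convex_on S (\<lambda>x. norm (L x))"
  unfolding convex_on_def
proof (intro conjI assms ballI allI impI)
  fix x y and a b :: real
  assume "0 \<le> a" "0 \<le> b" "a + b = 1"
  have "norm (L (a *\<^sub>R x + b *\<^sub>R y)) = norm (a *\<^sub>R L x + b *\<^sub>R L y)"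
    by (simp add: linear_add[OF assms(1)] linear_scale[OF assms(1)])
  also have "\<dots> \<le> a * norm (L x) + b * norm (L y)"
    using \<open>0 \<le> a\<close> \<open>0 \<le> b\<close> norm_triangle_ineq[of "a *\<^sub>R L x" "b *\<^sub>R L y"] by simp
  finally show "norm (L (a *\<^sub>R x + b *\<^sub>R y)) \<le> a * norm (L x) + b * norm (L y)" .
qed

lemma linear_had: "linear (had b)"
  by (rule linearI) (simp_all add: had_def vec_eq_iff algebra_simps)

lemma norm_matrix_had_capped_simplex_le:
  fixes A :: "real^'n^'m"
  assumes w: "w \<in> capped_simplex k" and Lk: "is_Lk k z \<Omega>" and dominated: "\<And>i. \<bar>b $ i\<bar> \<le> \<bar>z $ i\<bar>"
  shows "norm (A *v had b w) \<le> sqrt (1 + ric A k) * norm (restr \<Omega> z)"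
proof -
  let ?V = "indicator_vec ` {T. card T = k}"
  have vertex: "norm (A *v had b v) \<le> sqrt (1 + ric A k) * norm (restr \<Omega> z)" if "v \<in> ?V" for v
  proof -
    obtain T where T: "card T = k" "v = indicator_vec T"
      using \<open>v \<in> ?V\<close> by blast
    have "norm (A *v had b v) \<le> sqrt (1 + ric A k) * norm (restr T b)"
      unfolding T(2) had_indicator_vec by (rule ric_norm_upper[OF sparse_restr]) (simp add: T)
    also have "norm (restr T b) \<le> norm (restr \<Omega> z)"
    proof -
      have "norm (restr T b) \<le> norm (restr T z)"
        by (rule norm_le_componentwise_cart) (simp add: restr_def dominated)
      also have "\<dots> \<le> norm (restr \<Omega> z)"
        by (rule is_Lk_norm_restr_maximal[OF Lk]) (simp add: T)
      finally show ?thesis .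
    qed
    then have "sqrt (1 + ric A k) * norm (restr T b) \<le> sqrt (1 + ric A k) * norm (restr \<Omega> z)"
      by (simp add: mult_left_mono add_nonneg_nonneg ric_nonneg)
    finally show ?thesis .
  qed
  have "convex_on (convex hull ?V) (\<lambda>v. norm (A *v had b v))"
    by (intro convex_on_norm_linear linear_compose[OF linear_had matrix_vector_mul_linear,
          unfolded o_def] convex_convex_hull)
  then have "\<forall>v \<in> convex hull ?V. norm (A *v had b v) \<le> sqrt (1 + ric A k) * norm (restr \<Omega> z)"
    by (rule convex_on_convex_hull_bound) (use vertex in blast)
  then show ?thesis
    using subsetD[OF capped_simplex_subset_convex_hull w] by blast
qed

lemma rip_restr_error_bound:
  fixes A :: "real^'n^'m" and \<eta> :: "real^'m"
  assumes rip: "ric A (2 * k) < 1" and e: "sparse k e" and T: "card T \<le> 2 * k"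
    and fit: "norm (A *v v + \<eta>) \<le> norm (A *v e + \<eta>)"
  shows "norm (restr T v)
      \<le> sqrt ((1 + ric A k) / (1 - ric A (2 * k))) * norm e
        + 2 / sqrt (1 - ric A (2 * k)) * norm \<eta>
        + 1 / sqrt (1 - ric A (2 * k)) * norm (A *v restr (- T) v)"
proof -
  have split: "A *v restr T v = (A *v v + \<eta>) - \<eta> - A *v restr (- T) v"
  proof -
    have "v = restr T v + restr (- T) v"
      by (simp add: restr_def vec_eq_iff)
    then have "A *v v = A *v restr T v + A *v restr (- T) v"
      by (metis matrix_vector_right_distrib)
    then show ?thesis by simp
  qed
  have "sqrt (1 - ric A (2 * k)) * norm (restr T v) \<le> norm (A *v restr T v)"
    by (rule ric_norm_lower[OF sparse_restr[OF T]])
  also have "\<dots> \<le> norm (A *v v + \<eta>) + norm \<eta> + norm (A *v restr (- T) v)"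
    unfolding split
    using norm_triangle_ineq4[of "A *v v + \<eta> - \<eta>" "A *v restr (- T) v"]
      norm_triangle_ineq4[of "A *v v + \<eta>" \<eta>] by linarith
  also have "\<dots> \<le> norm (A *v e) + 2 * norm \<eta> + norm (A *v restr (- T) v)"
    using fit norm_triangle_ineq[of "A *v e" \<eta>] by simp
  also have "\<dots> \<le> sqrt (1 + ric A k) * norm e + 2 * norm \<eta> + norm (A *v restr (- T) v)"
    using ric_norm_upper[OF e, of A] by simp
  finally have bound: "sqrt (1 - ric A (2 * k)) * norm (restr T v)
      \<le> sqrt (1 + ric A k) * norm e + 2 * norm \<eta> + norm (A *v restr (- T) v)" .
  have "sqrt (1 - ric A (2 * k)) > 0"
    using rip by simp
  moreover have "sqrt ((1 + ric A k) / (1 - ric A (2 * k))) * norm e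
        + 2 / sqrt (1 - ric A (2 * k)) * norm \<eta>
        + 1 / sqrt (1 - ric A (2 * k)) * norm (A *v restr (- T) v)
      = (sqrt (1 + ric A k) * norm e + 2 * norm \<eta> + norm (A *v restr (- T) v))
        / sqrt (1 - ric A (2 * k))"
    unfolding real_sqrt_divide by (simp add: add_divide_distrib)
  ultimately show ?thesis
    using bound by (simp add: pos_le_divide_eq mult.commute)
qed

lemma binary_sparse_eq_indicator_vec:
  assumes "\<forall>i. v $ i = 0 \<or> v $ i = 1" "sparse k v" "S \<subseteq> supp v" "card S = k"
  shows "v = indicator_vec S"
proof -
  have "supp v = S"
    using assms(2-4) card_seteq[OF finite assms(3)] by (simp add: sparse_def)
  with assms(1) show ?thesis
    by (auto simp: indicator_vec_def vec_eq_iff supp_def)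
qed

lemma residual_le_of_optimal_weights:
  fixes A :: "real^'n^'m"
  assumes "(norm (A *v x + \<eta> - A *v had u w))\<^sup>2 \<le> (norm (A *v x + \<eta> - A *v had u (indicator_vec S)))\<^sup>2"
  shows "norm (A *v (restr S x - had u w) + (A *v restr (- S) x + \<eta>))
    \<le> norm (A *v had (restr S x - u) (indicator_vec S) + (A *v restr (- S) x + \<eta>))"
proof -
  have split: "A *v x + \<eta> - A *v had u w' = A *v (restr S x - had u w') + (A *v restr (- S) x + \<eta>)" for w'
  proof -
    have "x = restr S x + restr (- S) x"
      by (simp add: restr_def vec_eq_iff)
    then have "A *v x = A *v restr S x + A *v restr (- S) x"
      by (metis matrix_vector_right_distrib)
    then show ?thesis
      by (simp add: matrix_vector_mult_diff_distrib)
  qed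
  have "restr S x - had u (indicator_vec S) = had (restr S x - u) (indicator_vec S)"
    by (simp add: had_indicator_vec restr_def vec_eq_iff)
  with assms have "(norm (A *v (restr S x - had u w) + (A *v restr (- S) x + \<eta>)))\<^sup>2
      \<le> (norm (A *v had (restr S x - u) (indicator_vec S) + (A *v restr (- S) x + \<eta>)))\<^sup>2"
    unfolding split by simp
  then show ?thesis
    by (rule power2_le_imp_le) simp
qed

lemma norm_matrix_tail_le:
  fixes A :: "real^'n^'m"
  assumes w: "w \<in> capped_simplex k" and Lk: "is_Lk k (u - restr S x) \<Omega>" and "S \<subseteq> T"
  shows "norm (A *v restr (- T) (restr S x - had u w)) \<le> sqrt (1 + ric A k) * norm (restr \<Omega> (u - restr S x))"
proof -
  have "restr (- T) (restr S x - had u w) = - had (restr (- T) u) w"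
    using \<open>S \<subseteq> T\<close> by (auto simp: restr_def had_def vec_eq_iff)
  then have "norm (A *v restr (- T) (restr S x - had u w)) = norm (A *v had (restr (- T) u) w)"
    by (simp add: linear_neg[OF matrix_vector_mul_linear])
  also have "\<dots> \<le> sqrt (1 + ric A k) * norm (restr \<Omega> (u - restr S x))"
    using \<open>S \<subseteq> T\<close> by (intro norm_matrix_had_capped_simplex_le[OF w Lk]) (auto simp: restr_def)
  finally show ?thesis .
qed

theorem lemma5:
  fixes A :: "real^'n^'m" and x u w what :: "real^'n" and \<eta> :: "real^'m"
    and k :: nat and S S' \<Omega>' :: "'n set"
  assumes kn: "k \<le> CARD('n)"
    and rip: "ric A (2 * k) < 1"
    and S: "is_Lk k x S"
    and \<Omega>': "is_Lk k (had u w) \<Omega>'"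
    and S': "S' = supp (restr \<Omega>' (had u w))"
    and wfeas: "sum (\<lambda>i. w $ i) UNIV = real k" "\<forall>i. 0 \<le> w $ i \<and> w $ i \<le> 1"
    and wmin: "\<forall>w'. sum (\<lambda>i. w' $ i) UNIV = real k \<and> (\<forall>i. 0 \<le> w' $ i \<and> w' $ i \<le> 1) \<longrightarrow>
        (norm ((A *v x + \<eta>) - A *v (had u w)))\<^sup>2 \<le> (norm ((A *v x + \<eta>) - A *v (had u w')))\<^sup>2"
    and what01: "\<forall>i. what $ i = 0 \<or> what $ i = 1"
    and whatsp: "sparse k what"
    and Swhat: "S \<subseteq> supp what"
  shows "norm (restr (S \<union> S') (restr S x - had u w))
           \<le> sqrt ((1 + ric A k) / (1 - ric A (2 * k))) * norm (had (restr S x - u) what)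
             + 2 / sqrt (1 - ric A (2 * k)) * norm (A *v restr (- S) x + \<eta>)
             + 1 / sqrt (1 - ric A (2 * k)) * norm (A *v restr (- (S \<union> S')) (restr S x - had u w))
       \<and> (\<forall>\<Omega>''. is_Lk k (u - restr S x) \<Omega>'' \<longrightarrow>
           norm (A *v restr (- (S \<union> S')) (restr S x - had u w))
             \<le> 2 * sqrt (1 + ric A k) * norm (restr \<Omega>'' (u - restr S x)))"
proof -
  have cardS: "card S = k"
    using S by (simp add: is_Lk_def)
  have what: "what = indicator_vec S"
    using binary_sparse_eq_indicator_vec[OF what01 whatsp Swhat cardS] .
  have w: "w \<in> capped_simplex k"
    using wfeas by (simp add: capped_simplex_def)
  have fit: "norm (A *v (restr S x - had u w) + (A *v restr (- S) x + \<eta>))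
      \<le> norm (A *v had (restr S x - u) what + (A *v restr (- S) x + \<eta>))"
    unfolding what using wmin indicator_vec_in_capped_simplex[OF cardS]
    by (intro residual_le_of_optimal_weights) (simp add: capped_simplex_def)
  have card_T: "card (S \<union> S') \<le> 2 * k"
    using card_Un_le[of S S'] card_supp_restr_le[of \<Omega>' "had u w"] cardS \<Omega>'
    by (simp add: S' is_Lk_def)
  have sparse_e: "sparse k (had (restr S x - u) what)"
    using sparse_restr[of S k] cardS by (simp add: what had_indicator_vec)
  have tail: "norm (A *v restr (- (S \<union> S')) (restr S x - had u w))
      \<le> 2 * sqrt (1 + ric A k) * norm (restr \<Omega>'' (u - restr S x))"
    if "is_Lk k (u - restr S x) \<Omega>''" for \<Omega>''
  proof -
    have "0 \<le> sqrt (1 + ric A k) * norm (restr \<Omega>'' (u - restr S x))"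
      using ric_nonneg[of A k] by simp
    then show ?thesis
      using norm_matrix_tail_le[where T = "S \<union> S'" and A = A, OF w that Un_upper1] by linarith
  qed
  show ?thesis
    using rip_restr_error_bound[OF rip sparse_e card_T fit] tail by blast
qed

end
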